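(* Let $G$ be a graph with $n$ vertices and maximum degree $\Delta$. Then for every positive integer $q\leq n-\Delta-1$, $\eta(G\lor K_q)=\max\{\eta(G),q\}$.
   Context: All graphs are finite, simple and undirected. $K_q$ is the complete graph on $q$ vertices. For disjoint graphs $G_1,G_2$, the join $G_1\lor G_2$ has vertex set $V(G_1)\cup V(G_2)$ and edge set $E(G_1)\cup E(G_2)\cup\{(u,v):u\in V(G_1),v\in V(G_2)\}$. For a vertex $v$, $N(v)$ is its set of neighbours. For a positive integer $k$, $[k]=\{1,\dots,k\}$. For a labeling $f:V(G)\to[k]$ and $S\subseteq V(G)$, $f(S)=\sum_{u\in S}f(u)$. A labeling $f:V(G)\to[k]$ is an additive $k$-coloring if $f(N(u))\neq f(N(v))$ for every edge $(u,v)$ of $G$. The additive chromatic number $\eta(G)$ is the least $k$ for which $G$ has an additive $k$-coloring. *)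

theory Defs
  imports Main
begin

definition simple_graph :: "'a set \<Rightarrow> ('a \<Rightarrow> 'a \<Rightarrow> bool) \<Rightarrow> bool" where
  "simple_graph V E \<longleftrightarrow> finite V \<and> (\<forall>u v. E u v \<longrightarrow> u \<in> V \<and> v \<in> V)
     \<and> (\<forall>u v. E u v \<longrightarrow> E v u) \<and> (\<forall>u. \<not> E u u)"

definition nbhd :: "'a set \<Rightarrow> ('a \<Rightarrow> 'a \<Rightarrow> bool) \<Rightarrow> 'a \<Rightarrow> 'a set" where
  "nbhd V E u = {v \<in> V. E u v}"

definition max_degree :: "'a set \<Rightarrow> ('a \<Rightarrow> 'a \<Rightarrow> bool) \<Rightarrow> nat" where
  "max_degree V E = Max (insert 0 ((\<lambda>v. card (nbhd V E v)) ` V))"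

definition additive_coloring :: "'a set \<Rightarrow> ('a \<Rightarrow> 'a \<Rightarrow> bool) \<Rightarrow> nat \<Rightarrow> ('a \<Rightarrow> nat) \<Rightarrow> bool" where
  "additive_coloring V E k f \<longleftrightarrow> (\<forall>v\<in>V. f v \<in> {1..k})
     \<and> (\<forall>u\<in>V. \<forall>v\<in>V. E u v \<longrightarrow> sum f (nbhd V E u) \<noteq> sum f (nbhd V E v))"

definition eta :: "'a set \<Rightarrow> ('a \<Rightarrow> 'a \<Rightarrow> bool) \<Rightarrow> nat" where
  "eta V E = (LEAST k. k \<ge> 1 \<and> (\<exists>f. additive_coloring V E k f))"

definition join_K_verts :: "'a set \<Rightarrow> nat \<Rightarrow> ('a + nat) set" where
  "join_K_verts V q = Inl ` V \<union> Inr ` {..<q}"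

fun join_K_edges :: "'a set \<Rightarrow> ('a \<Rightarrow> 'a \<Rightarrow> bool) \<Rightarrow> nat \<Rightarrow> ('a + nat) \<Rightarrow> ('a + nat) \<Rightarrow> bool" where
  "join_K_edges V E q (Inl a) (Inl b) = E a b"
| "join_K_edges V E q (Inr i) (Inr j) = (i < q \<and> j < q \<and> i \<noteq> j)"
| "join_K_edges V E q (Inl a) (Inr j) = (a \<in> V \<and> j < q)"
| "join_K_edges V E q (Inr i) (Inl b) = (b \<in> V \<and> i < q)"

end

theory Submission
  imports Defs "HOL-Library.Nat_Bijection"
begin

text \<open>In \<open>G \<or> K\<^sub>q\<close> a vertex \<open>u\<close> of \<open>G\<close> has neighbourhood sum \<open>f(N\<^sub>G(u)) + T\<close>, where \<open>T\<close> is the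
  total weight of the clique, while a clique vertex \<open>i\<close> has neighbourhood sum \<open>W + T - f(i)\<close>,
  where \<open>W\<close> is the total weight of \<open>G\<close>. Hence an additive colouring of the join restricts to
  one of \<open>G\<close>, and adjacent clique vertices need distinct colours, forcing \<open>k \<ge> q\<close>.
  Conversely, extend an additive \<open>k\<close>-colouring of \<open>G\<close> (\<open>k \<ge> q\<close>) by colouring the clique
  injectively with \<open>1, \<dots>, q\<close>. Every vertex \<open>u\<close> has at least \<open>n - \<Delta> \<ge> q + 1\<close> non-neighbours,
  each of weight \<open>\<ge> 1\<close>, so \<open>f(N\<^sub>G(u)) < W - q \<le> W - f(i)\<close>: vertices of \<open>G\<close> and of the clique
  never clash.\<close>

lemma simple_graph_finite: "simple_graph V E \<Longrightarrow> finite V"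
  by (simp add: simple_graph_def)

lemma nbhd_subset: "simple_graph V E \<Longrightarrow> nbhd V E v \<subseteq> V"
  by (auto simp: nbhd_def)

lemma finite_nbhd: "simple_graph V E \<Longrightarrow> finite (nbhd V E v)"
  by (meson finite_subset nbhd_subset simple_graph_finite)

lemma card_nbhd_le_max_degree:
  "simple_graph V E \<Longrightarrow> v \<in> V \<Longrightarrow> card (nbhd V E v) \<le> max_degree V E"
  unfolding max_degree_def using simple_graph_finite by (intro Max_ge) auto

lemma nbhd_join_Inl:
  assumes "simple_graph V E" "v \<in> V"
  shows "nbhd (join_K_verts V q) (join_K_edges V E q) (Inl v) = Inl ` nbhd V E v \<union> Inr ` {..<q}"
proof (rule set_eqI)
  fix x show "x \<in> nbhd (join_K_verts V q) (join_K_edges V E q) (Inl v) \<longleftrightarrow>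
      x \<in> Inl ` nbhd V E v \<union> Inr ` {..<q}"
    using assms by (cases x) (auto simp: nbhd_def join_K_verts_def simple_graph_def)
qed

lemma nbhd_join_Inr:
  assumes "i < q"
  shows "nbhd (join_K_verts V q) (join_K_edges V E q) (Inr i) = Inl ` V \<union> Inr ` ({..<q} - {i})"
proof (rule set_eqI)
  fix x show "x \<in> nbhd (join_K_verts V q) (join_K_edges V E q) (Inr i) \<longleftrightarrow>
      x \<in> Inl ` V \<union> Inr ` ({..<q} - {i})"
    using assms by (cases x) (auto simp: nbhd_def join_K_verts_def)
qed

lemma sum_Inl_Inr_image:
  assumes "finite A" "finite B"
  shows "sum f (Inl ` A \<union> Inr ` B) = sum (f \<circ> Inl) A + sum (f \<circ> Inr) B"
proof -
  have "sum f (Inl ` A \<union> Inr ` B) = sum f (Inl ` A) + sum f (Inr ` B)"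
    using assms by (intro sum.union_disjoint) auto
  also have "\<dots> = sum (f \<circ> Inl) A + sum (f \<circ> Inr) B"
    by (simp add: sum.reindex)
  finally show ?thesis .
qed

lemma sum_nbhd_join_Inl:
  assumes "simple_graph V E" "v \<in> V"
  shows "sum f (nbhd (join_K_verts V q) (join_K_edges V E q) (Inl v))
     = sum (f \<circ> Inl) (nbhd V E v) + sum (f \<circ> Inr) {..<q}"
  using assms by (simp add: nbhd_join_Inl sum_Inl_Inr_image finite_nbhd)

lemma sum_nbhd_join_Inr:
  assumes "simple_graph V E" "i < q"
  shows "sum f (nbhd (join_K_verts V q) (join_K_edges V E q) (Inr i)) + f (Inr i)
     = sum (f \<circ> Inl) V + sum (f \<circ> Inr) {..<q}"
proof -
  have "finite V" using assms(1) by (rule simple_graph_finite)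
  moreover have "sum (f \<circ> Inr) {..<q} = sum (f \<circ> Inr) ({..<q} - {i}) + f (Inr i)"
    using assms(2) by (simp add: sum.remove[of "{..<q}" i] add.commute)
  ultimately show ?thesis using assms by (simp add: nbhd_join_Inr sum_Inl_Inr_image add.assoc)
qed

lemma additive_coloring_mono:
  "additive_coloring V E k f \<Longrightarrow> k \<le> k' \<Longrightarrow> additive_coloring V E k' f"
  unfolding additive_coloring_def by force

text \<open>Weights \<open>2\<^sup>i\<close> along an enumeration of \<open>V\<close> make neighbourhood sums binary codes of the
  neighbourhoods, and adjacent vertices have different neighbourhoods (\<open>v \<in> N(u) - N(v)\<close>).\<close>
lemma additive_coloring_exists:
  assumes "simple_graph V E"
  shows "\<exists>f. additive_coloring V E (2 ^ card V) f"
proof -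
  have fV: "finite V" using assms by (rule simple_graph_finite)
  obtain h where h: "bij_betw h V {0..<card V}" using ex_bij_betw_finite_nat[OF fV] by blast
  have inj: "inj_on h V" using h bij_betw_def by blast
  define f where "f v = (2::nat) ^ h v" for v
  have sum_eq_encode: "sum f (nbhd V E u) = set_encode (h ` nbhd V E u)" for u
  proof -
    have "inj_on h (nbhd V E u)" using inj nbhd_subset[OF assms] inj_on_subset by blast
    then show ?thesis by (simp add: set_encode_def sum.reindex f_def o_def)
  qed
  have "additive_coloring V E (2 ^ card V) f"
    unfolding additive_coloring_def
  proof (intro conjI ballI impI)
    fix v assume "v \<in> V"
    then have "h v \<le> card V" using h bij_betwE by fastforce
    then have "(2::nat) ^ h v \<le> 2 ^ card V" by (rule power_increasing) simp
    then show "f v \<in> {1..2 ^ card V}" by (simp add: f_def)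
  next
    fix u v assume uv: "u \<in> V" "v \<in> V" "E u v"
    show "sum f (nbhd V E u) \<noteq> sum f (nbhd V E v)"
    proof
      assume "sum f (nbhd V E u) = sum f (nbhd V E v)"
      then have "set_encode (h ` nbhd V E u) = set_encode (h ` nbhd V E v)"
        by (simp add: sum_eq_encode)
      then have "h ` nbhd V E u = h ` nbhd V E v"
        by (rule inj_onD[OF inj_on_set_encode]) (use finite_nbhd[OF assms] in auto)
      then have "nbhd V E u = nbhd V E v"
        using inj nbhd_subset[OF assms] by (simp add: inj_on_image_eq_iff)
      moreover have "v \<in> nbhd V E u" "v \<notin> nbhd V E v"
        using uv assms by (auto simp: nbhd_def simple_graph_def)
      ultimately show False by simp
    qed
  qed
  then show ?thesis by blast
qed

lemma eta_coloring_exists: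
  assumes "simple_graph V E"
  shows "\<exists>f. additive_coloring V E (eta V E) f"
proof -
  have "\<exists>k. 1 \<le> k \<and> (\<exists>f. additive_coloring V E k f)"
    using additive_coloring_exists[OF assms] by (intro exI[of _ "2 ^ card V"]) simp
  then have "1 \<le> eta V E \<and> (\<exists>f. additive_coloring V E (eta V E) f)"
    unfolding eta_def by (rule LeastI_ex)
  then show ?thesis ..
qed

lemma eta_le: "1 \<le> k \<Longrightarrow> additive_coloring V E k f \<Longrightarrow> eta V E \<le> k"
  unfolding eta_def by (rule Least_le) blast

lemma additive_coloring_join_restrict:
  assumes "simple_graph V E" "additive_coloring (join_K_verts V q) (join_K_edges V E q) k f"
  shows "additive_coloring V E k (f \<circ> Inl)"
  unfolding additive_coloring_def
proof (intro conjI ballI impI)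
  fix v assume "v \<in> V" then show "(f \<circ> Inl) v \<in> {1..k}"
    using assms(2) by (auto simp: additive_coloring_def join_K_verts_def)
next
  fix u v assume uv: "u \<in> V" "v \<in> V" "E u v"
  then have "sum f (nbhd (join_K_verts V q) (join_K_edges V E q) (Inl u))
      \<noteq> sum f (nbhd (join_K_verts V q) (join_K_edges V E q) (Inl v))"
    using assms(2) by (auto simp: additive_coloring_def join_K_verts_def)
  then show "sum (f \<circ> Inl) (nbhd V E u) \<noteq> sum (f \<circ> Inl) (nbhd V E v)"
    using uv assms(1) by (simp add: sum_nbhd_join_Inl)
qed

lemma additive_coloring_join_clique_le:
  assumes "simple_graph V E" "additive_coloring (join_K_verts V q) (join_K_edges V E q) k f"
  shows "q \<le> k"
proof -
  let ?N = "nbhd (join_K_verts V q) (join_K_edges V E q)"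
  have "inj_on (f \<circ> Inr) {..<q}"
  proof (rule inj_onI)
    fix i j assume ij: "i \<in> {..<q}" "j \<in> {..<q}" "(f \<circ> Inr) i = (f \<circ> Inr) j"
    show "i = j"
    proof (rule ccontr)
      assume "i \<noteq> j"
      then have "sum f (?N (Inr i)) \<noteq> sum f (?N (Inr j))"
        using assms(2) ij by (auto simp: additive_coloring_def join_K_verts_def)
      moreover have "sum f (?N (Inr i)) + f (Inr i) = sum f (?N (Inr j)) + f (Inr j)"
        using sum_nbhd_join_Inr[OF assms(1), of i q f] sum_nbhd_join_Inr[OF assms(1), of j q f] ij
        by simp
      ultimately show False using ij by simp
    qed
  qed
  moreover have "(f \<circ> Inr) ` {..<q} \<subseteq> {1..k}"
    using assms(2) by (auto simp: additive_coloring_def join_K_verts_def)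
  ultimately have "card {..<q} \<le> card {1..k}" by (intro card_inj_on_le[of "f \<circ> Inr"]) auto
  then show ?thesis by simp
qed

lemma sum_nbhd_add_card_non_nbhd_le:
  assumes "simple_graph V E" "u \<in> V" "\<forall>v\<in>V. 1 \<le> g v"
  shows "sum g (nbhd V E u) + (card V - card (nbhd V E u)) \<le> (sum g V :: nat)"
proof -
  let ?N = "nbhd V E u"
  have sub: "?N \<subseteq> V" using assms(1) by (rule nbhd_subset)
  have fV: "finite V" using assms(1) by (rule simple_graph_finite)
  have "card V - card ?N = card (V - ?N)"
    by (rule card_Diff_subset[OF finite_nbhd[OF assms(1)] sub, symmetric])
  also have "\<dots> = (\<Sum>v\<in>V - ?N. 1)"
    by simp
  also have "\<dots> \<le> sum g (V - ?N)"
    by (rule sum_mono) (use assms(3) in blast)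
  finally have "sum g ?N + (card V - card ?N) \<le> sum g ?N + sum g (V - ?N)"
    by (rule add_left_mono)
  also have "\<dots> = sum g V"
    using sum.subset_diff[OF sub fV, of g] by (simp add: add.commute)
  finally show ?thesis .
qed

lemma additive_coloring_join_extend:
  assumes G: "simple_graph V E" and g: "additive_coloring V E k g" and "q \<le> k"
    and sparse: "q + max_degree V E + 1 \<le> card V"
  shows "additive_coloring (join_K_verts V q) (join_K_edges V E q) k (case_sum g Suc)"
proof -
  let ?N = "nbhd (join_K_verts V q) (join_K_edges V E q)" and ?f = "case_sum g Suc"
  define T where "T = sum Suc {..<q}"
  have gV: "\<forall>v\<in>V. g v \<in> {1..k}"
    and gE: "\<forall>u\<in>V. \<forall>v\<in>V. E u v \<longrightarrow> sum g (nbhd V E u) \<noteq> sum g (nbhd V E v)"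
    using g unfolding additive_coloring_def by blast+
  have sum_Inl: "sum ?f (?N (Inl u)) = sum g (nbhd V E u) + T" if "u \<in> V" for u
    using sum_nbhd_join_Inl[OF G that, of ?f q] by (simp add: o_def T_def)
  have sum_Inr: "sum ?f (?N (Inr j)) + Suc j = sum g V + T" if "j < q" for j
    using sum_nbhd_join_Inr[OF G that, of ?f] by (simp add: o_def T_def)
  have Inl_less_Inr: "sum ?f (?N (Inl u)) < sum ?f (?N (Inr j))" if "u \<in> V" "j < q" for u j
  proof -
    have "\<forall>v\<in>V. 1 \<le> g v" using gV by auto
    then have "sum g (nbhd V E u) + (card V - card (nbhd V E u)) \<le> sum g V"
      by (rule sum_nbhd_add_card_non_nbhd_le[OF G that(1)])
    then show ?thesis
      using card_nbhd_le_max_degree[OF G that(1)] sum_Inl[OF that(1)] sum_Inr[OF that(2)]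
        sparse that(2) by linarith
  qed
  show ?thesis
    unfolding additive_coloring_def
  proof (intro conjI ballI impI)
    fix x assume "x \<in> join_K_verts V q" then show "?f x \<in> {1..k}"
      using gV \<open>q \<le> k\<close> by (auto simp: join_K_verts_def)
  next
    fix x y assume x: "x \<in> join_K_verts V q" and y: "y \<in> join_K_verts V q"
      and xy: "join_K_edges V E q x y"
    show "sum ?f (?N x) \<noteq> sum ?f (?N y)"
    proof (cases x; cases y)
      fix u v assume xu: "x = Inl u" and yv: "y = Inl v"
      have "u \<in> V" "v \<in> V" "E u v" using x y xy xu yv by (auto simp: join_K_verts_def)
      then show ?thesis unfolding xu yv using gE sum_Inl by simp
    next
      fix u j assume xu: "x = Inl u" and yj: "y = Inr j"
      have "u \<in> V" "j < q" using x y xu yj by (auto simp: join_K_verts_def)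
      then show ?thesis unfolding xu yj using Inl_less_Inr[of u j] by simp
    next
      fix i v assume xi: "x = Inr i" and yv: "y = Inl v"
      have "v \<in> V" "i < q" using x y xi yv by (auto simp: join_K_verts_def)
      then show ?thesis unfolding xi yv using Inl_less_Inr[of v i] by simp
    next
      fix i j assume xi: "x = Inr i" and yj: "y = Inr j"
      have "i < q" "j < q" "i \<noteq> j" using x y xy xi yj by (auto simp: join_K_verts_def)
      then show ?thesis unfolding xi yj using sum_Inr[of i] sum_Inr[of j] by linarith
    qed
  qed
qed

theorem mainTheorem4:
  fixes V :: "'a set" and E :: "'a \<Rightarrow> 'a \<Rightarrow> bool" and q :: nat
  assumes "simple_graph V E"
    and "q \<ge> 1"
    and "q + max_degree V E + 1 \<le> card V"
  shows "eta (join_K_verts V q) (join_K_edges V E q) = max (eta V E) q"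
  unfolding eta_def[of "join_K_verts V q"]
proof (rule Least_equality)
  obtain g where "additive_coloring V E (eta V E) g"
    using eta_coloring_exists[OF assms(1)] by blast
  then have "additive_coloring V E (max (eta V E) q) g"
    by (rule additive_coloring_mono) simp
  then have "additive_coloring (join_K_verts V q) (join_K_edges V E q) (max (eta V E) q)
      (case_sum g Suc)"
    by (rule additive_coloring_join_extend[OF assms(1) _ max.cobounded2 assms(3)])
  then show "1 \<le> max (eta V E) q \<and>
      (\<exists>f. additive_coloring (join_K_verts V q) (join_K_edges V E q) (max (eta V E) q) f)"
    using assms(2) by auto
next
  fix k assume "1 \<le> k \<and> (\<exists>f. additive_coloring (join_K_verts V q) (join_K_edges V E q) k f)"
  then obtain f where k: "1 \<le> k" and f: "additive_coloring (join_K_verts V q) (join_K_edges V E q) k f"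
    by blast
  have "eta V E \<le> k" by (rule eta_le[OF k additive_coloring_join_restrict[OF assms(1) f]])
  moreover have "q \<le> k" by (rule additive_coloring_join_clique_le[OF assms(1) f])
  ultimately show "max (eta V E) q \<le> k" by simp
qed

end
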